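(* For $p\in(0,1)$ let $X_p$ be a geometric random variable with $P\{X_p=k\}=p(1-p)^k$, $k=0,1,2,\dots$. Then $$\inf_{p\in(0,1)}P\left\{|X_p-E[X_p]|\le\sqrt{\mathrm{Var}(X_p)}\right\}=\inf_{p\in(0,1)}P\left\{|X_p-E[X_p]|<\sqrt{\mathrm{Var}(X_p)}\right\}=\frac34.$$ *)

theory Defs
  imports "HOL-Probability.Probability"
begin

end

theory Submission
  imports Defs
begin

text \<open>
  Write \<open>q = 1 - p\<close> and \<open>s = sqrt q\<close>. The geometric law has mean \<open>q / p\<close> and standard
  deviation \<open>s / p\<close>; since \<open>q < s\<close> and \<open>p = (1 - s) (1 + s)\<close>, the interval
  mean \<open>\<plusminus>\<close> sd reaches below \<open>0\<close> and up to \<open>s / (1 - s)\<close>. So both events are initial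
  segments \<open>{..<n}\<close> of probability \<open>1 - s\<^bsup>2n\<^esup>\<close> with \<open>n \<ge> s / (1 - s)\<close>, i.e.
  \<open>s \<le> n / (n + 1)\<close>, and Bernoulli's inequality \<open>(1 + 1/n)\<^sup>n \<ge> 2\<close> gives \<open>s\<^sup>n \<le> 1/2\<close>.
  The strict event has probability exactly \<open>3/4\<close> at \<open>p = 3/4\<close>, where the upper end
  is \<open>1\<close>; for \<open>p > 3/4\<close> the closed event is \<open>{0}\<close>, of probability \<open>p\<close>.
\<close>

lemma geometric_sums_times_n_squared:
  fixes c :: "'a::{banach,real_normed_field}"
  assumes "norm c < 1"
  shows "(\<lambda>n. c ^ n * of_nat n ^ 2) sums (c * (1 + c) / (1 - c) ^ 3)"
proof -
  have "(\<lambda>n. of_nat n * z ^ n) sums (z / (1 - z)\<^sup>2)" if "norm z < 1" for z :: 'a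
    using geometric_sums_times_n[OF that] by (simp add: mult.commute)
  moreover have "((\<lambda>z. z / (1 - z)\<^sup>2) has_field_derivative ((1 + c) / (1 - c) ^ 3)) (at c)"
  proof -
    have "1 - c \<noteq> 0" using assms by auto
    moreover have "(1 - c)\<^sup>2 - c * (2 * c - 2) = (1 + c) * (1 - c)" "(1 - c) ^ 4 = (1 - c) ^ 3 * (1 - c)"
      by algebra+
    ultimately show ?thesis
      by (auto intro!: derivative_eq_intros)
  qed
  ultimately have "(\<lambda>n. diffs of_nat n * c ^ n) sums ((1 + c) / (1 - c) ^ 3)"
    using assms by (intro termdiffs_sums_strong)
  then have "(\<lambda>n. c * (of_nat (Suc n) ^ 2 * c ^ n)) sums (c * ((1 + c) / (1 - c) ^ 3))"
    by (intro sums_mult) (simp add: diffs_def power2_eq_square)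
  then have "(\<lambda>n. c ^ Suc n * of_nat (Suc n) ^ 2) sums (c * (1 + c) / (1 - c) ^ 3)"
    by (simp add: mult_ac)
  then show ?thesis
    by (subst (asm) sums_Suc_iff) simp
qed

lemma has_bochner_integral_pmf_nat_sums:
  fixes M :: "nat pmf" and f :: "nat \<Rightarrow> real"
  assumes "\<And>n. 0 \<le> f n" and "(\<lambda>n. pmf M n * f n) sums S"
  shows "has_bochner_integral (measure_pmf M) f S"
proof -
  have "integrable (count_space UNIV) (\<lambda>n. pmf M n * f n)"
    using assms unfolding integrable_count_space_nat_iff by (simp add: sums_iff)
  moreover from this have "(\<integral>n. pmf M n * f n \<partial>count_space UNIV) = S"
    using assms by (simp add: integral_count_space_nat sums_iff)
  ultimately show ?thesis
    unfolding has_bochner_integral_iff measure_pmf_eq_density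
    by (simp add: integrable_density integral_density)
qed

lemma has_bochner_integral_geometric_pmf_square:
  assumes "0 < p" "p \<le> 1"
  shows "has_bochner_integral (measure_pmf (geometric_pmf p)) (\<lambda>n. real n ^ 2)
           ((1 - p) * (2 - p) / p ^ 2)"
proof (rule has_bochner_integral_pmf_nat_sums)
  have "(\<lambda>n. p * ((1 - p) ^ n * real n ^ 2)) sums (p * ((1 - p) * (1 + (1 - p)) / (1 - (1 - p)) ^ 3))"
    using assms by (intro sums_mult geometric_sums_times_n_squared) auto
  then show "(\<lambda>n. pmf (geometric_pmf p) n * real n ^ 2) sums ((1 - p) * (2 - p) / p ^ 2)"
    using assms by (simp add: mult_ac power3_eq_cube power2_eq_square)
qed simp

lemma variance_geometric_pmf:
  assumes "0 < p" "p \<le> 1"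
  shows "measure_pmf.variance (geometric_pmf p) real = (1 - p) / p ^ 2"
proof -
  note second_moment = has_bochner_integral_geometric_pmf_square[OF assms]
  have "measure_pmf.variance (geometric_pmf p) real = (1 - p) * (2 - p) / p ^ 2 - ((1 - p) / p) ^ 2"
    using assms second_moment
    by (subst measure_pmf.variance_eq)
       (auto simp: integrable_real_geometric_pmf expectation_geometric_pmf has_bochner_integral_iff)
  also have "\<dots> = (1 - p) / p ^ 2"
    using assms by (simp add: field_simps power2_eq_square)
  finally show ?thesis .
qed

lemma prob_geometric_pmf_lessThan:
  assumes "0 < p" "p \<le> 1"
  shows "measure_pmf.prob (geometric_pmf p) {..<n} = 1 - (1 - p) ^ n"
proof -
  have "measure_pmf.prob (geometric_pmf p) {..<n} = (\<Sum>k<n. (1 - p) ^ k * p)"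
    using assms by (simp add: measure_measure_pmf_finite)
  also have "\<dots> = 1 - (1 - p) ^ n"
    by (induction n) (simp_all add: algebra_simps)
  finally show ?thesis .
qed

lemma abs_of_nat_diff_less_eq_lessThan:
  fixes m r :: real
  assumes "m < r"
  shows "{k::nat. \<bar>real k - m\<bar> < r} = {..<nat \<lceil>m + r\<rceil>}"
  using assms by (auto simp: less_ceiling_iff zless_nat_eq_int_zless)

lemma power_le_half_if_ge:
  fixes s :: real
  assumes "0 < s" "s < 1" "s / (1 - s) \<le> real n"
  shows "s ^ n \<le> 1 / 2"
proof -
  have "0 < real n"
    using assms divide_pos_pos[of s "1 - s"] by linarith
  have "s \<le> real n / (real n + 1)"
    using assms by (simp add: field_simps)
  then have "s ^ n \<le> (real n / (real n + 1)) ^ n"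
    using assms by (intro power_mono) auto
  also have "\<dots> = 1 / (1 + 1 / real n) ^ n"
    using \<open>0 < real n\<close> by (simp add: power_divide field_simps)
  also have "\<dots> \<le> 1 / 2"
  proof -
    have "2 \<le> 1 + real n * (1 / real n)" using \<open>0 < real n\<close> by simp
    also have "\<dots> \<le> (1 + 1 / real n) ^ n"
      by (rule Bernoulli_inequality) (rule order_trans[of _ 0]; simp)
    finally show ?thesis by (simp add: divide_le_eq)
  qed
  finally show ?thesis .
qed

lemma geometric_pmf_mean_sd:
  assumes "0 < p" "p < 1"
  defines "\<mu> \<equiv> measure_pmf.expectation (geometric_pmf p) real"
    and "\<sigma> \<equiv> sqrt (measure_pmf.variance (geometric_pmf p) real)"
    and "s \<equiv> sqrt (1 - p)"
  shows "\<mu> < \<sigma>" and "\<mu> + \<sigma> = s / (1 - s)"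
proof -
  have s: "0 < s" "s < 1" "1 - p = s\<^sup>2"
    using assms by (auto simp: s_def)
  have p: "p = (1 - s) * (1 + s)"
    using s by (simp add: algebra_simps power2_eq_square)
  have \<mu>: "\<mu> = s\<^sup>2 / p"
    unfolding \<mu>_def s(3)[symmetric] using assms by (simp add: expectation_geometric_pmf)
  have \<sigma>: "\<sigma> = s / p"
    unfolding \<sigma>_def s_def using assms by (simp add: variance_geometric_pmf real_sqrt_divide)
  have "s\<^sup>2 < s"
    using s by (simp add: power2_eq_square)
  then show "\<mu> < \<sigma>"
    unfolding \<mu> \<sigma> using assms by (simp add: divide_strict_right_mono)
  have "\<mu> + \<sigma> = s * (1 + s) / ((1 - s) * (1 + s))"
    unfolding \<mu> \<sigma> by (simp add: p add_divide_distrib power2_eq_square algebra_simps)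
  also have "\<dots> = s / (1 - s)"
    using s by simp
  finally show "\<mu> + \<sigma> = s / (1 - s)" .
qed

lemma prob_geometric_pmf_dist_mean_less_sd:
  assumes p: "0 < p" "p < 1"
  defines "\<mu> \<equiv> measure_pmf.expectation (geometric_pmf p) real"
    and "\<sigma> \<equiv> sqrt (measure_pmf.variance (geometric_pmf p) real)"
  shows "measure_pmf.prob (geometric_pmf p) {k. \<bar>real k - \<mu>\<bar> < \<sigma>}
         = 1 - (1 - p) ^ nat \<lceil>sqrt (1 - p) / (1 - sqrt (1 - p))\<rceil>"
  using p geometric_pmf_mean_sd[OF p] unfolding \<mu>_def \<sigma>_def
  by (simp add: abs_of_nat_diff_less_eq_lessThan prob_geometric_pmf_lessThan)

lemma three_quarters_le_prob_geometric_pmf_dist_mean_less_sd: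
  assumes p: "0 < p" "p < 1"
  defines "\<mu> \<equiv> measure_pmf.expectation (geometric_pmf p) real"
    and "\<sigma> \<equiv> sqrt (measure_pmf.variance (geometric_pmf p) real)"
  shows "3 / 4 \<le> measure_pmf.prob (geometric_pmf p) {k. \<bar>real k - \<mu>\<bar> < \<sigma>}"
proof -
  define s where "s = sqrt (1 - p)"
  define n where "n = nat \<lceil>s / (1 - s)\<rceil>"
  have s: "0 < s" "s < 1" "1 - p = s\<^sup>2"
    using p by (auto simp: s_def)
  have "s / (1 - s) \<le> real n"
    unfolding n_def by linarith
  then have "s ^ n \<le> 1 / 2"
    using s by (intro power_le_half_if_ge)
  then have "(s ^ n)\<^sup>2 \<le> (1 / 2)\<^sup>2"
    using s by (intro power_mono) auto
  moreover have "(1 - p) ^ n = (s ^ n)\<^sup>2"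
    by (simp add: s(3) mult.commute flip: power_mult)
  ultimately have "(1 - p) ^ n \<le> 1 / 4"
    by (simp add: power2_eq_square)
  then show ?thesis
    using p by (simp add: prob_geometric_pmf_dist_mean_less_sd \<mu>_def \<sigma>_def s_def n_def)
qed

lemma real_sqrt_one_quarter: "sqrt (1 / 4 :: real) = 1 / 2"
  by (simp add: real_sqrt_divide)

lemma prob_geometric_pmf_dist_mean_le_sd_le:
  assumes "3 / 4 < p" "p < 1"
  defines "\<mu> \<equiv> measure_pmf.expectation (geometric_pmf p) real"
    and "\<sigma> \<equiv> sqrt (measure_pmf.variance (geometric_pmf p) real)"
  shows "measure_pmf.prob (geometric_pmf p) {k. \<bar>real k - \<mu>\<bar> \<le> \<sigma>} \<le> p"
proof -
  have "sqrt (1 - p) < sqrt (1 / 4)"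
    using assms by simp
  then have "sqrt (1 - p) < 1 / 2"
    unfolding real_sqrt_one_quarter .
  then have "\<mu> + \<sigma> < 1"
    using assms geometric_pmf_mean_sd(2)[of p] by (simp add: \<mu>_def \<sigma>_def divide_less_eq)
  then have "{k. \<bar>real k - \<mu>\<bar> \<le> \<sigma>} \<subseteq> {0}"
    by auto
  then have "measure_pmf.prob (geometric_pmf p) {k. \<bar>real k - \<mu>\<bar> \<le> \<sigma>}
             \<le> measure_pmf.prob (geometric_pmf p) {0}"
    by (rule measure_pmf.finite_measure_mono) simp
  also have "\<dots> = p"
    using assms by (simp add: measure_pmf_single)
  finally show ?thesis .
qed

theorem proposition3p1:
  shows "(INF p\<in>{0<..<1::real}. measure_pmf.prob (geometric_pmf p)
            {k. \<bar>real k - measure_pmf.expectation (geometric_pmf p) real\<bar>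
                  \<le> sqrt (measure_pmf.variance (geometric_pmf p) real)}) = 3 / 4
       \<and> (INF p\<in>{0<..<1::real}. measure_pmf.prob (geometric_pmf p)
            {k. \<bar>real k - measure_pmf.expectation (geometric_pmf p) real\<bar>
                  < sqrt (measure_pmf.variance (geometric_pmf p) real)}) = 3 / 4"
    (is "(INF p\<in>?I. ?closed p) = _ \<and> (INF p\<in>?I. ?open p) = _")
proof
  have open_ge: "3 / 4 \<le> ?open p" if "p \<in> ?I" for p
    using that three_quarters_le_prob_geometric_pmf_dist_mean_less_sd by simp
  have closed_ge: "3 / 4 \<le> ?closed p" if "p \<in> ?I" for p
    using open_ge[OF that] by (rule order_trans) (auto intro: measure_pmf.finite_measure_mono)
  have "?open (3 / 4) = 3 / 4"
    by (simp add: prob_geometric_pmf_dist_mean_less_sd real_sqrt_one_quarter)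
  moreover have "(INF p\<in>?I. ?open p) \<le> ?open (3 / 4)"
    by (rule cINF_lower[OF bdd_belowI2[OF open_ge]]) auto
  ultimately have "(INF p\<in>?I. ?open p) \<le> 3 / 4"
    by simp
  then show "(INF p\<in>?I. ?open p) = 3 / 4"
    using open_ge by (intro antisym cINF_greatest) auto
  have "(INF p\<in>?I. ?closed p) \<le> 3 / 4"
  proof (rule dense_ge_bounded[of "3 / 4" 1])
    fix p :: real assume "3 / 4 < p" "p < 1"
    then have "(INF p\<in>?I. ?closed p) \<le> ?closed p"
      by (intro cINF_lower[OF bdd_belowI2[OF closed_ge]]) auto
    also have "\<dots> \<le> p"
      using \<open>3 / 4 < p\<close> \<open>p < 1\<close> by (rule prob_geometric_pmf_dist_mean_le_sd_le)
    finally show "(INF p\<in>?I. ?closed p) \<le> p" .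
  qed simp
  then show "(INF p\<in>?I. ?closed p) = 3 / 4"
    using closed_ge by (intro antisym cINF_greatest) auto
qed

end
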